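(* Let $\mathbf{C}$ be a category with a stable system of monics $\mathcal{M}$. (i) If $\mathbf{C}$ has pushouts along $\mathcal{M}$-morphisms, the functor $\mathrm{dom}:\mathsf{PO}_h(\mathbf{C},\mathcal{M})\to\mathbf{C}$ is a Grothendieck opfibration. (ii) If $\mathbf{C}$ has final pullback complements (FPCs) along $\mathcal{M}$-morphisms, the functor $\mathrm{dom}:\mathsf{FPC}_h(\mathbf{C},\mathcal{M})\to\mathbf{C}$ is a Grothendieck fibration.
   Context: A stable system of monics $\mathcal{M}$: class of monomorphisms containing all isomorphisms, closed under composition, stable under pullback; $\rightarrowtail$ denotes $\mathcal{M}$-morphisms. "Has pushouts along $\mathcal{M}$-morphisms": pushouts of spans $A\leftarrow B\rightarrowtail B'$ exist. FPC of composable $A\xrightarrow{f}B\xrightarrow{m}C$: a pair $A\xrightarrow{n}F\xrightarrow{g}C$ with $g\circ n=m\circ f$ forming a pullback square, such that for every pullback square $m\circ u=w\circ v$ ($u:X\to B$, $v:X\to Y$, $w:Y\to C$) and every $t:X\to A$ with $f\circ t=u$ there is a unique $y:Y\to F$ with $g\circ y=w$, $y\circ v=n\circ t$; "has FPCs along $\mathcal{M}$-morphisms" means FPCs exist whenever $m\in\mathcal{M}$. For $\mathsf{T}\in\{\mathsf{PO},\mathsf{FPC}\}$, the category $\mathsf{T}_h(\mathbf{C},\mathcal{M})$: objects are $\mathcal{M}$-morphisms; a morphism from $m:A\rightarrowtail A'$ to $n:B\rightarrowtail B'$ is a pair $(f,f')$ with $f:A\to B$, $f':A'\to B'$, $n\circ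 f=f'\circ m$, such that the square is a pushout of $(m,f)$ (case $\mathsf{PO}$), resp. $(m,f')$ is an FPC of $(f,n)$ (case $\mathsf{FPC}$); composition componentwise (horizontal pasting). $\mathrm{dom}$ sends $m:A\rightarrowtail A'$ to $A$ and $(f,f')$ to $f$. Grothendieck fibration/opfibration: a functor $P:\mathbf{E}\to\mathbf{B}$ is a fibration if for every $f:b'\to b$ and $e$ over $b$ there is a Cartesian $\varphi:e'\to e$ over $f$ (Cartesian: for every $\psi:e''\to e$ and $g$ with $P(\varphi)\circ g=P(\psi)$ there is a unique $\chi$ with $\varphi\circ\chi=\psi$, $P(\chi)=g$); it is an opfibration if for every $f:b\to b'$ and $e$ over $b$ there is an op-Cartesian $\varphi:e\to e'$ over $f$ (for every $\psi:e\to e''$ and $g$ with $g\circ P(\varphi)=P(\psi)$ there is a unique $\chi$ with $\chi\circ\varphi=\psi$, $P(\chi)=g$).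
   Formalization: In (i), having pushouts along $\mathcal{M}$-morphisms also demands that each such pushout of an $\mathcal{M}$-morphism be again an $\mathcal{M}$-morphism, that is, the pushout leg opposite it lies in $\mathcal{M}$. The statement above fails without it. *)

theory Defs
  imports Main
begin

record ('o, 'a) category =
  ob  :: "'o set"
  ar  :: "'a set"
  dm  :: "'a \<Rightarrow> 'o"
  cd  :: "'a \<Rightarrow> 'o"
  idt :: "'o \<Rightarrow> 'a"
  cmp :: "'a \<Rightarrow> 'a \<Rightarrow> 'a"   (* cmp C g f = g \<circ> f *)

definition is_category :: "('o, 'a) category \<Rightarrow> bool" where
  "is_category C \<longleftrightarrow>
     (\<forall>f\<in>ar C. dm C f \<in> ob C \<and> cd C f \<in> ob C) \<and>
     (\<forall>a\<in>ob C. idt C a \<in> ar C \<and> dm C (idt C a) = a \<and> cd C (idt C a) = a) \<and>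
     (\<forall>f g. f \<in> ar C \<and> g \<in> ar C \<and> cd C f = dm C g \<longrightarrow>
        cmp C g f \<in> ar C \<and> dm C (cmp C g f) = dm C f \<and> cd C (cmp C g f) = cd C g) \<and>
     (\<forall>f\<in>ar C. cmp C (idt C (cd C f)) f = f \<and> cmp C f (idt C (dm C f)) = f) \<and>
     (\<forall>f g h. f \<in> ar C \<and> g \<in> ar C \<and> h \<in> ar C \<and> cd C f = dm C g \<and> cd C g = dm C h \<longrightarrow>
        cmp C h (cmp C g f) = cmp C (cmp C h g) f)"

definition is_functor ::
  "('o, 'a) category \<Rightarrow> ('p, 'b) category \<Rightarrow> ('o \<Rightarrow> 'p) \<Rightarrow> ('a \<Rightarrow> 'b) \<Rightarrow> bool" where
  "is_functor E B FO FA \<longleftrightarrow>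
     (\<forall>a\<in>ob E. FO a \<in> ob B) \<and>
     (\<forall>f\<in>ar E. FA f \<in> ar B \<and> dm B (FA f) = FO (dm E f) \<and> cd B (FA f) = FO (cd E f)) \<and>
     (\<forall>a\<in>ob E. FA (idt E a) = idt B (FO a)) \<and>
     (\<forall>f g. f \<in> ar E \<and> g \<in> ar E \<and> cd E f = dm E g \<longrightarrow>
        FA (cmp E g f) = cmp B (FA g) (FA f))"

definition is_mono :: "('o, 'a) category \<Rightarrow> 'a \<Rightarrow> bool" where
  "is_mono C m \<longleftrightarrow> m \<in> ar C \<and>
     (\<forall>g h. g \<in> ar C \<and> h \<in> ar C \<and> cd C g = dm C m \<and> cd C h = dm C m \<and> dm C g = dm C h \<and>
        cmp C m g = cmp C m h \<longrightarrow> g = h)"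

definition is_iso :: "('o, 'a) category \<Rightarrow> 'a \<Rightarrow> bool" where
  "is_iso C f \<longleftrightarrow> f \<in> ar C \<and>
     (\<exists>g. g \<in> ar C \<and> dm C g = cd C f \<and> cd C g = dm C f \<and>
        cmp C g f = idt C (dm C f) \<and> cmp C f g = idt C (cd C f))"

text \<open>is_pullback C f g p q: the square with f : B \<rightarrow> D, g : E \<rightarrow> D, p : P \<rightarrow> B, q : P \<rightarrow> E,
  f \<circ> p = g \<circ> q, is a pullback (q is the pullback of f along g).\<close>
definition is_pullback :: "('o, 'a) category \<Rightarrow> 'a \<Rightarrow> 'a \<Rightarrow> 'a \<Rightarrow> 'a \<Rightarrow> bool" where
  "is_pullback C f g p q \<longleftrightarrow>
     f \<in> ar C \<and> g \<in> ar C \<and> p \<in> ar C \<and> q \<in> ar C \<and>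
     cd C f = cd C g \<and> dm C p = dm C q \<and> cd C p = dm C f \<and> cd C q = dm C g \<and>
     cmp C f p = cmp C g q \<and>
     (\<forall>p' q'. p' \<in> ar C \<and> q' \<in> ar C \<and> dm C p' = dm C q' \<and> cd C p' = dm C f \<and> cd C q' = dm C g \<and>
        cmp C f p' = cmp C g q' \<longrightarrow>
        (\<exists>!u. u \<in> ar C \<and> dm C u = dm C p' \<and> cd C u = dm C p \<and> cmp C p u = p' \<and> cmp C q u = q'))"

text \<open>is_pushout C m f n f': m : A \<rightarrow> A', f : A \<rightarrow> B, n : B \<rightarrow> B', f' : A' \<rightarrow> B',
  n \<circ> f = f' \<circ> m, and the square is a pushout of the span (m, f).\<close>
definition is_pushout :: "('o, 'a) category \<Rightarrow> 'a \<Rightarrow> 'a \<Rightarrow> 'a \<Rightarrow> 'a \<Rightarrow> bool" where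
  "is_pushout C m f n f' \<longleftrightarrow>
     m \<in> ar C \<and> f \<in> ar C \<and> n \<in> ar C \<and> f' \<in> ar C \<and>
     dm C m = dm C f \<and> cd C f = dm C n \<and> cd C m = dm C f' \<and> cd C n = cd C f' \<and>
     cmp C n f = cmp C f' m \<and>
     (\<forall>h k. h \<in> ar C \<and> k \<in> ar C \<and> dm C h = cd C f \<and> dm C k = cd C m \<and> cd C h = cd C k \<and>
        cmp C h f = cmp C k m \<longrightarrow>
        (\<exists>!u. u \<in> ar C \<and> dm C u = cd C n \<and> cd C u = cd C h \<and> cmp C u n = h \<and> cmp C u f' = k))"

text \<open>is_FPC C f m n g: for composable f : A \<rightarrow> B, m : B \<rightarrow> C', the pair n : A \<rightarrow> F, g : F \<rightarrow> C'
  is a final pullback complement of (f, m).\<close>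
definition is_FPC :: "('o, 'a) category \<Rightarrow> 'a \<Rightarrow> 'a \<Rightarrow> 'a \<Rightarrow> 'a \<Rightarrow> bool" where
  "is_FPC C f m n g \<longleftrightarrow>
     is_pullback C m g f n \<and>
     (\<forall>u v w t. is_pullback C m w u v \<and> t \<in> ar C \<and> dm C t = dm C u \<and> cd C t = dm C f \<and>
        cmp C f t = u \<longrightarrow>
        (\<exists>!y. y \<in> ar C \<and> dm C y = cd C v \<and> cd C y = dm C g \<and>
              cmp C g y = w \<and> cmp C y v = cmp C n t))"

definition stable_system :: "('o, 'a) category \<Rightarrow> 'a set \<Rightarrow> bool" where
  "stable_system C M \<longleftrightarrow>
     M \<subseteq> ar C \<and>
     (\<forall>m\<in>M. is_mono C m) \<and>
     (\<forall>f. is_iso C f \<longrightarrow> f \<in> M) \<and>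
     (\<forall>m n. m \<in> M \<and> n \<in> M \<and> cd C m = dm C n \<longrightarrow> cmp C n m \<in> M) \<and>
     (\<forall>m g p q. m \<in> M \<and> is_pullback C m g p q \<longrightarrow> q \<in> M)"

text \<open>Pushouts along M-morphisms (with the pushout of an M-morphism again in M).\<close>
definition has_pushouts_along :: "('o, 'a) category \<Rightarrow> 'a set \<Rightarrow> bool" where
  "has_pushouts_along C M \<longleftrightarrow>
     (\<forall>m f. m \<in> M \<and> f \<in> ar C \<and> dm C f = dm C m \<longrightarrow> (\<exists>n f'. n \<in> M \<and> is_pushout C m f n f'))"

definition has_FPCs_along :: "('o, 'a) category \<Rightarrow> 'a set \<Rightarrow> bool" where
  "has_FPCs_along C M \<longleftrightarrow>
     (\<forall>f m. m \<in> M \<and> f \<in> ar C \<and> cd C f = dm C m \<longrightarrow> (\<exists>n g. is_FPC C f m n g))"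

text \<open>A morphism from m to n is represented as the quadruple (m, n, f, f').\<close>
definition PO_h :: "('o, 'a) category \<Rightarrow> 'a set \<Rightarrow> ('a, 'a \<times> 'a \<times> 'a \<times> 'a) category" where
  "PO_h C M = \<lparr> ob = M,
     ar = {(m, n, f, f'). m \<in> M \<and> n \<in> M \<and> is_pushout C m f n f'},
     dm = (\<lambda>(m, n, f, f'). m),
     cd = (\<lambda>(m, n, f, f'). n),
     idt = (\<lambda>m. (m, m, idt C (dm C m), idt C (cd C m))),
     cmp = (\<lambda>(n, p, g, g') (m, n', f, f'). (m, p, cmp C g f, cmp C g' f')) \<rparr>"

definition FPC_h :: "('o, 'a) category \<Rightarrow> 'a set \<Rightarrow> ('a, 'a \<times> 'a \<times> 'a \<times> 'a) category" where
  "FPC_h C M = \<lparr> ob = M,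
     ar = {(m, n, f, f'). m \<in> M \<and> n \<in> M \<and> is_FPC C f n m f'},
     dm = (\<lambda>(m, n, f, f'). m),
     cd = (\<lambda>(m, n, f, f'). n),
     idt = (\<lambda>m. (m, m, idt C (dm C m), idt C (cd C m))),
     cmp = (\<lambda>(n, p, g, g') (m, n', f, f'). (m, p, cmp C g f, cmp C g' f')) \<rparr>"

definition dom_ar :: "'a \<times> 'a \<times> 'a \<times> 'a \<Rightarrow> 'a" where
  "dom_ar = (\<lambda>(m, n, f, f'). f)"

definition cartesian ::
  "('o, 'a) category \<Rightarrow> ('p, 'b) category \<Rightarrow> ('a \<Rightarrow> 'b) \<Rightarrow> 'a \<Rightarrow> bool" where
  "cartesian E B PA \<phi> \<longleftrightarrow> \<phi> \<in> ar E \<and>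
     (\<forall>\<psi> g. \<psi> \<in> ar E \<and> cd E \<psi> = cd E \<phi> \<and> g \<in> ar B \<and> cd B g = dm B (PA \<phi>) \<and>
        dm B g = dm B (PA \<psi>) \<and> cmp B (PA \<phi>) g = PA \<psi> \<longrightarrow>
        (\<exists>!\<chi>. \<chi> \<in> ar E \<and> dm E \<chi> = dm E \<psi> \<and> cd E \<chi> = dm E \<phi> \<and>
              cmp E \<phi> \<chi> = \<psi> \<and> PA \<chi> = g))"

definition opcartesian ::
  "('o, 'a) category \<Rightarrow> ('p, 'b) category \<Rightarrow> ('a \<Rightarrow> 'b) \<Rightarrow> 'a \<Rightarrow> bool" where
  "opcartesian E B PA \<phi> \<longleftrightarrow> \<phi> \<in> ar E \<and>
     (\<forall>\<psi> g. \<psi> \<in> ar E \<and> dm E \<psi> = dm E \<phi> \<and> g \<in> ar B \<and> dm B g = cd B (PA \<phi>) \<and>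
        cd B g = cd B (PA \<psi>) \<and> cmp B g (PA \<phi>) = PA \<psi> \<longrightarrow>
        (\<exists>!\<chi>. \<chi> \<in> ar E \<and> dm E \<chi> = cd E \<phi> \<and> cd E \<chi> = cd E \<psi> \<and>
              cmp E \<chi> \<phi> = \<psi> \<and> PA \<chi> = g))"

definition fibration ::
  "('o, 'a) category \<Rightarrow> ('p, 'b) category \<Rightarrow> ('o \<Rightarrow> 'p) \<Rightarrow> ('a \<Rightarrow> 'b) \<Rightarrow> bool" where
  "fibration E B PO PA \<longleftrightarrow>
     is_category E \<and> is_category B \<and> is_functor E B PO PA \<and>
     (\<forall>f\<in>ar B. \<forall>e\<in>ob E. PO e = cd B f \<longrightarrow>
        (\<exists>\<phi>. \<phi> \<in> ar E \<and> cd E \<phi> = e \<and> PA \<phi> = f \<and> cartesian E B PA \<phi>))"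

definition opfibration ::
  "('o, 'a) category \<Rightarrow> ('p, 'b) category \<Rightarrow> ('o \<Rightarrow> 'p) \<Rightarrow> ('a \<Rightarrow> 'b) \<Rightarrow> bool" where
  "opfibration E B PO PA \<longleftrightarrow>
     is_category E \<and> is_category B \<and> is_functor E B PO PA \<and>
     (\<forall>f\<in>ar B. \<forall>e\<in>ob E. PO e = dm B f \<longrightarrow>
        (\<exists>\<phi>. \<phi> \<in> ar E \<and> dm E \<phi> = e \<and> PA \<phi> = f \<and> opcartesian E B PA \<phi>))"

end

theory Submission
  imports Defs
begin

text \<open>
  Both parts come down to a factorisation property of single squares.
  If (e, n, f, f') and (e, p, h, h') are pushouts and h = g f, the universal property of the first
  square gives u with u n = p g and u f' = h'; by pushout cancellation (n, p, g, u) is again a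
  pushout, and u is unique since the legs of a pushout are jointly epic. This is op-Cartesianness
  over dom. Dually, if (n, e, f, f') and (q, e, h, h') are FPCs and h = f g, the FPC property of the
  first square applied to the pullback (q, e, h, h') gives the unique y with f' y = h' and y q = n g,
  and FPC cancellation shows that (q, n, g, y) is an FPC. Lifts exist by hypothesis; for FPCs the
  new M-morphism n is a pullback of e, hence in M by stability.
  Pushout pasting and cancellation are pullback pasting and cancellation in the opposite category.
\<close>

locale cat =
  fixes C :: "('o, 'a) category"
  assumes is_cat: "is_category C"
begin

abbreviation comp (infixr "\<cdot>" 55) where "g \<cdot> f \<equiv> cmp C g f"

lemma comp_ar [simp]: "f \<in> ar C \<Longrightarrow> g \<in> ar C \<Longrightarrow> cd C f = dm C g \<Longrightarrow> g \<cdot> f \<in> ar C"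
  and dm_comp [simp]: "f \<in> ar C \<Longrightarrow> g \<in> ar C \<Longrightarrow> cd C f = dm C g \<Longrightarrow> dm C (g \<cdot> f) = dm C f"
  and cd_comp [simp]: "f \<in> ar C \<Longrightarrow> g \<in> ar C \<Longrightarrow> cd C f = dm C g \<Longrightarrow> cd C (g \<cdot> f) = cd C g"
  and dm_ob [simp]: "f \<in> ar C \<Longrightarrow> dm C f \<in> ob C"
  and cd_ob [simp]: "f \<in> ar C \<Longrightarrow> cd C f \<in> ob C"
  and idt_ar [simp]: "a \<in> ob C \<Longrightarrow> idt C a \<in> ar C"
  and dm_idt [simp]: "a \<in> ob C \<Longrightarrow> dm C (idt C a) = a"
  and cd_idt [simp]: "a \<in> ob C \<Longrightarrow> cd C (idt C a) = a"
  using is_cat unfolding is_category_def by blast+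

lemma comp_idt_left [simp]: "f \<in> ar C \<Longrightarrow> cd C f = a \<Longrightarrow> idt C a \<cdot> f = f"
  and comp_idt_right [simp]: "f \<in> ar C \<Longrightarrow> dm C f = a \<Longrightarrow> f \<cdot> idt C a = f"
  using is_cat unfolding is_category_def by blast+

lemma comp_assoc:
  "f \<in> ar C \<Longrightarrow> g \<in> ar C \<Longrightarrow> h \<in> ar C \<Longrightarrow> cd C f = dm C g \<Longrightarrow> cd C g = dm C h
    \<Longrightarrow> h \<cdot> (g \<cdot> f) = (h \<cdot> g) \<cdot> f"
  using is_cat unfolding is_category_def by blast

lemma comp_square_left:
  assumes sq: "g \<cdot> f = k \<cdot> h" and "f \<in> ar C" "g \<in> ar C" "h \<in> ar C" "k \<in> ar C" "x \<in> ar C"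
    "cd C f = dm C g" "cd C h = dm C k" "cd C g = dm C x"
  shows "(x \<cdot> g) \<cdot> f = (x \<cdot> k) \<cdot> h"
proof -
  have "cd C k = dm C x"
    using assms cd_comp by metis
  then show ?thesis
    using assms by (metis comp_assoc)
qed

lemma comp_square_right:
  assumes sq: "g \<cdot> f = k \<cdot> h" and "f \<in> ar C" "g \<in> ar C" "h \<in> ar C" "k \<in> ar C" "x \<in> ar C"
    "cd C f = dm C g" "cd C h = dm C k" "cd C x = dm C f"
  shows "g \<cdot> (f \<cdot> x) = k \<cdot> (h \<cdot> x)"
proof -
  have "cd C x = dm C h"
    using assms dm_comp by metis
  then show ?thesis
    using assms by (metis comp_assoc)
qed

lemma pullbackD:
  assumes "is_pullback C f g p q"
  shows "f \<in> ar C" "g \<in> ar C" "p \<in> ar C" "q \<in> ar C"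
    "cd C f = cd C g" "dm C p = dm C q" "cd C p = dm C f" "cd C q = dm C g"
    "f \<cdot> p = g \<cdot> q"
  using assms unfolding is_pullback_def by blast+

lemma pullback_universal:
  assumes "is_pullback C f g p q" "p' \<in> ar C" "q' \<in> ar C" "dm C p' = dm C q'"
    "cd C p' = dm C f" "cd C q' = dm C g" "f \<cdot> p' = g \<cdot> q'"
  shows "\<exists>!u. u \<in> ar C \<and> dm C u = dm C p' \<and> cd C u = dm C p \<and> p \<cdot> u = p' \<and> q \<cdot> u = q'"
  using assms unfolding is_pullback_def by blast

lemma pullback_factor:
  assumes "is_pullback C f g p q" "p' \<in> ar C" "q' \<in> ar C" "dm C p' = dm C q'"
    "cd C p' = dm C f" "cd C q' = dm C g" "f \<cdot> p' = g \<cdot> q'"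
  obtains u where "u \<in> ar C" "dm C u = dm C p'" "cd C u = dm C p" "p \<cdot> u = p'" "q \<cdot> u = q'"
  using pullback_universal[OF assms] by blast

lemma pullback_jointly_monic:
  assumes pb: "is_pullback C f g p q"
    and u: "u \<in> ar C" "cd C u = dm C p" and u': "u' \<in> ar C" "cd C u' = dm C p"
    and "dm C u = dm C u'" "p \<cdot> u = p \<cdot> u'" "q \<cdot> u = q \<cdot> u'"
  shows "u = u'"
proof -
  note sq = pullbackD[OF pb]
  have "f \<cdot> (p \<cdot> u) = g \<cdot> (q \<cdot> u)"
    using sq u by (simp add: comp_assoc)
  then have "\<exists>!v. v \<in> ar C \<and> dm C v = dm C (p \<cdot> u) \<and> cd C v = dm C p \<and> p \<cdot> v = p \<cdot> u \<and> q \<cdot> v = q \<cdot> u"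
    using sq u by (intro pullback_universal[OF pb]) simp_all
  then show ?thesis
    using assms sq by auto
qed

lemma is_pullbackI:
  assumes "f \<in> ar C" "g \<in> ar C" "p \<in> ar C" "q \<in> ar C"
    "cd C f = cd C g" "dm C p = dm C q" "cd C p = dm C f" "cd C q = dm C g"
    "f \<cdot> p = g \<cdot> q"
    and factor: "\<And>p' q'. p' \<in> ar C \<Longrightarrow> q' \<in> ar C \<Longrightarrow> dm C p' = dm C q' \<Longrightarrow>
      cd C p' = dm C f \<Longrightarrow> cd C q' = dm C g \<Longrightarrow> f \<cdot> p' = g \<cdot> q' \<Longrightarrow>
      \<exists>u. u \<in> ar C \<and> dm C u = dm C p' \<and> cd C u = dm C p \<and> p \<cdot> u = p' \<and> q \<cdot> u = q'"
    and jointly_monic: "\<And>u u'. u \<in> ar C \<Longrightarrow> cd C u = dm C p \<Longrightarrow> u' \<in> ar C \<Longrightarrow> cd C u' = dm C p \<Longrightarrow>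
      dm C u = dm C u' \<Longrightarrow> p \<cdot> u = p \<cdot> u' \<Longrightarrow> q \<cdot> u = q \<cdot> u' \<Longrightarrow> u = u'"
  shows "is_pullback C f g p q"
  unfolding is_pullback_def
proof (intro conjI allI impI)
  fix p' q'
  assume "p' \<in> ar C \<and> q' \<in> ar C \<and> dm C p' = dm C q' \<and> cd C p' = dm C f \<and>
    cd C q' = dm C g \<and> f \<cdot> p' = g \<cdot> q'"
  then show "\<exists>!u. u \<in> ar C \<and> dm C u = dm C p' \<and> cd C u = dm C p \<and> p \<cdot> u = p' \<and> q \<cdot> u = q'"
    using factor jointly_monic by (metis (no_types, lifting))
qed (use assms in simp_all)

lemma pullback_sym:
  assumes pb: "is_pullback C f g p q"
  shows "is_pullback C g f q p"
proof (rule is_pullbackI)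
  note sq = pullbackD[OF pb]
  fix p' q'
  assume "p' \<in> ar C" "q' \<in> ar C" "dm C p' = dm C q'" "cd C p' = dm C g" "cd C q' = dm C f" "g \<cdot> p' = f \<cdot> q'"
  then obtain u where "u \<in> ar C" "dm C u = dm C q'" "cd C u = dm C p" "p \<cdot> u = q'" "q \<cdot> u = p'"
    using pullback_factor[OF pb, of q' p'] by auto
  then show "\<exists>u. u \<in> ar C \<and> dm C u = dm C p' \<and> cd C u = dm C q \<and> q \<cdot> u = p' \<and> p \<cdot> u = q'"
    using sq \<open>dm C p' = dm C q'\<close> by auto
qed (use pullbackD[OF pb] pullback_jointly_monic[OF pb] in auto)

lemma pullback_idt:
  assumes m: "m \<in> ar C"
  shows "is_pullback C m (idt C (cd C m)) (idt C (dm C m)) m"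
proof (rule is_pullbackI)
  fix p' q'
  assume "p' \<in> ar C" "q' \<in> ar C" "dm C p' = dm C q'" "cd C p' = dm C m"
    "cd C q' = dm C (idt C (cd C m))" "m \<cdot> p' = idt C (cd C m) \<cdot> q'"
  then show "\<exists>u. u \<in> ar C \<and> dm C u = dm C p' \<and> cd C u = dm C (idt C (dm C m)) \<and>
      idt C (dm C m) \<cdot> u = p' \<and> m \<cdot> u = q'"
    using m by (intro exI[of _ p']) simp
qed (use m in simp_all)

lemma pullback_paste:
  assumes R: "is_pullback C e f' f n" and L: "is_pullback C n w u v"
  shows "is_pullback C e (f' \<cdot> w) (f \<cdot> u) v"
proof (rule is_pullbackI)
  note R' = pullbackD[OF R] and L' = pullbackD[OF L]
  show "e \<cdot> (f \<cdot> u) = (f' \<cdot> w) \<cdot> v"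
    using R' L' comp_square_left[of n u w v f'] by (simp add: comp_assoc)
  fix p' q'
  assume H: "p' \<in> ar C" "q' \<in> ar C" "dm C p' = dm C q'" "cd C p' = dm C e"
    "cd C q' = dm C (f' \<cdot> w)" "e \<cdot> p' = (f' \<cdot> w) \<cdot> q'"
  obtain r where r: "r \<in> ar C" "dm C r = dm C p'" "cd C r = dm C f" "f \<cdot> r = p'" "n \<cdot> r = w \<cdot> q'"
    by (rule pullback_factor[OF R, of p' "w \<cdot> q'"]) (use H R' L' in \<open>simp_all add: comp_assoc\<close>)
  obtain z where z: "z \<in> ar C" "dm C z = dm C r" "cd C z = dm C u" "u \<cdot> z = r" "v \<cdot> z = q'"
    by (rule pullback_factor[OF L, of r q']) (use r H R' L' in simp_all)
  show "\<exists>z. z \<in> ar C \<and> dm C z = dm C p' \<and> cd C z = dm C (f \<cdot> u) \<and> (f \<cdot> u) \<cdot> z = p' \<and> v \<cdot> z = q'"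
    using z r R' L' by (intro exI[of _ z]) (simp add: comp_assoc[of z u f, symmetric])
next
  note R' = pullbackD[OF R] and L' = pullbackD[OF L]
  fix z z'
  assume zz': "z \<in> ar C" "cd C z = dm C (f \<cdot> u)" "z' \<in> ar C" "cd C z' = dm C (f \<cdot> u)"
    "dm C z = dm C z'" "(f \<cdot> u) \<cdot> z = (f \<cdot> u) \<cdot> z'" "v \<cdot> z = v \<cdot> z'"
  have L_sq: "n \<cdot> (u \<cdot> x) = w \<cdot> (v \<cdot> x)" if "x \<in> ar C" "cd C x = dm C u" for x
    by (rule comp_square_right) (use that L' in simp_all)
  have "u \<cdot> z = u \<cdot> z'"
    by (rule pullback_jointly_monic[OF R]) (use zz' R' L' L_sq in \<open>simp_all add: comp_assoc[of _ u f]\<close>)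
  then show "z = z'"
    by - (rule pullback_jointly_monic[OF L], use zz' R' L' in simp_all)
qed (use pullbackD[OF R] pullbackD[OF L] in simp_all)

lemma pullback_cancel:
  assumes R: "is_pullback C e f' f n" and O: "is_pullback C e (f' \<cdot> w) (f \<cdot> u) v"
    and sq: "n \<cdot> u = w \<cdot> v"
    and u: "u \<in> ar C" "cd C u = dm C n" and w: "w \<in> ar C" "cd C w = cd C n"
  shows "is_pullback C n w u v"
proof (rule is_pullbackI)
  note R' = pullbackD[OF R] and O' = pullbackD[OF O]
  have uv: "dm C u = dm C v" "cd C v = dm C w"
    using O' R' u w by simp_all
  have R_sq: "e \<cdot> (f \<cdot> x) = f' \<cdot> (n \<cdot> x)" if "x \<in> ar C" "cd C x = dm C n" for x
    by (rule comp_square_right) (use that R' in simp_all)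
  fix p' q'
  assume H: "p' \<in> ar C" "q' \<in> ar C" "dm C p' = dm C q'" "cd C p' = dm C n"
    "cd C q' = dm C w" "n \<cdot> p' = w \<cdot> q'"
  obtain z where z: "z \<in> ar C" "dm C z = dm C (f \<cdot> p')" "cd C z = dm C (f \<cdot> u)"
      "(f \<cdot> u) \<cdot> z = f \<cdot> p'" "v \<cdot> z = q'"
    by (rule pullback_factor[OF O, of "f \<cdot> p'" q'])
      (use H R' w R_sq in \<open>simp_all add: comp_assoc[of q' w f']\<close>)
  have "n \<cdot> (u \<cdot> z) = w \<cdot> (v \<cdot> z)"
    by (rule comp_square_right[OF sq]) (use z u w uv R' O' in simp_all)
  then have "u \<cdot> z = p'"
    by - (rule pullback_jointly_monic[OF R], use z u H R' in \<open>simp_all add: comp_assoc[of z u f]\<close>)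
  then show "\<exists>z. z \<in> ar C \<and> dm C z = dm C p' \<and> cd C z = dm C u \<and> u \<cdot> z = p' \<and> v \<cdot> z = q'"
    using z u R' H by (intro exI[of _ z]) simp
next
  note R' = pullbackD[OF R] and O' = pullbackD[OF O]
  fix z z'
  assume "z \<in> ar C" "cd C z = dm C u" "z' \<in> ar C" "cd C z' = dm C u"
    "dm C z = dm C z'" "u \<cdot> z = u \<cdot> z'" "v \<cdot> z = v \<cdot> z'"
  then show "z = z'"
    by - (rule pullback_jointly_monic[OF O], use u R' in \<open>simp_all add: comp_assoc[of _ u f, symmetric]\<close>)
qed (use pullbackD[OF O] pullbackD[OF R] sq u w in simp_all)

end

definition op_cat :: "('o, 'a) category \<Rightarrow> ('o, 'a) category" where
  "op_cat C = C\<lparr>dm := cd C, cd := dm C, cmp := \<lambda>g f. cmp C f g\<rparr>"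

lemma op_cat_simps [simp]:
  "ob (op_cat C) = ob C" "ar (op_cat C) = ar C" "dm (op_cat C) = cd C" "cd (op_cat C) = dm C"
  "idt (op_cat C) = idt C" "cmp (op_cat C) g f = cmp C f g"
  unfolding op_cat_def by simp_all

lemma is_category_op_cat: "is_category C \<Longrightarrow> is_category (op_cat C)"
  unfolding is_category_def by simp

context cat
begin

interpretation op: cat "op_cat C"
  by unfold_locales (rule is_category_op_cat[OF is_cat])

lemma is_pushout_iff_pullback_op: "is_pushout C m f n f' \<longleftrightarrow> is_pullback (op_cat C) m f f' n"
proof -
  have "is_pushout C m f n f' \<longleftrightarrow> is_pullback (op_cat C) f m n f'"
    unfolding is_pushout_def is_pullback_def by (simp add: conj_commute conj_left_commute eq_commute)
  then show ?thesis
    using op.pullback_sym by blast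
qed

lemma pushoutD:
  assumes "is_pushout C m f n f'"
  shows "m \<in> ar C" "f \<in> ar C" "n \<in> ar C" "f' \<in> ar C"
    "dm C m = dm C f" "cd C f = dm C n" "cd C m = dm C f'" "cd C n = cd C f'"
    "n \<cdot> f = f' \<cdot> m"
  using assms unfolding is_pushout_def by blast+

lemma pushout_factor:
  assumes "is_pushout C m f n f'" "h \<in> ar C" "k \<in> ar C" "dm C h = cd C f"
    "dm C k = cd C m" "cd C h = cd C k" "h \<cdot> f = k \<cdot> m"
  obtains u where "u \<in> ar C" "dm C u = cd C n" "cd C u = cd C h" "u \<cdot> n = h" "u \<cdot> f' = k"
  using assms unfolding is_pushout_def by metis

lemma pushout_jointly_epic:
  assumes "is_pushout C m f n f'"
    and "u \<in> ar C" "dm C u = cd C n" "u' \<in> ar C" "dm C u' = cd C n"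
    and "cd C u = cd C u'" "u \<cdot> n = u' \<cdot> n" "u \<cdot> f' = u' \<cdot> f'"
  shows "u = u'"
  using assms pushoutD(8)[OF assms(1)] op.pullback_jointly_monic[of m f f' n u u']
  by (simp add: is_pushout_iff_pullback_op)

lemma pushout_idt:
  assumes "m \<in> ar C"
  shows "is_pushout C m (idt C (dm C m)) m (idt C (cd C m))"
  using op.pullback_idt assms by (simp add: is_pushout_iff_pullback_op)

lemma pushout_paste:
  assumes "is_pushout C m f n f'" and "is_pushout C n g p g'"
  shows "is_pushout C m (g \<cdot> f) p (g' \<cdot> f')"
  using op.pullback_paste assms by (simp add: is_pushout_iff_pullback_op)

lemma pushout_cancel:
  assumes L: "is_pushout C m f n f'" and O: "is_pushout C m (g \<cdot> f) p (g' \<cdot> f')"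
    and sq: "p \<cdot> g = g' \<cdot> n"
    and g: "g \<in> ar C" "dm C g = dm C n" and g': "g' \<in> ar C" "dm C g' = cd C n"
  shows "is_pushout C n g p g'"
  using op.pullback_cancel[of m f f' n g g' p] assms by (simp add: is_pushout_iff_pullback_op)

lemma pushout_opcartesian_factor:
  assumes L: "is_pushout C e f n f'" and O: "is_pushout C e h p h'"
    and g: "g \<in> ar C" "dm C g = cd C f" and gf: "g \<cdot> f = h"
  shows "\<exists>!u. is_pushout C n g p u \<and> u \<cdot> f' = h'"
proof -
  note L' = pushoutD[OF L] and O' = pushoutD[OF O]
  have "cd C g = dm C p"
    using g gf L' O' by (metis cd_comp)
  with g have sq: "(p \<cdot> g) \<cdot> f = h' \<cdot> e"
    using g gf L' O' by (simp add: comp_assoc[of f g p, symmetric])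
  obtain u where u: "u \<in> ar C" "dm C u = cd C n" "cd C u = cd C (p \<cdot> g)" "u \<cdot> n = p \<cdot> g" "u \<cdot> f' = h'"
    by (rule pushout_factor[OF L, of "p \<cdot> g" h']) (use sq g gf L' O' \<open>cd C g = dm C p\<close> in simp_all)
  show ?thesis
  proof (rule ex1I[of _ u])
    show "is_pushout C n g p u \<and> u \<cdot> f' = h'"
      using O gf u g L' by (auto intro: pushout_cancel[OF L])
  next
    fix u'
    assume u': "is_pushout C n g p u' \<and> u' \<cdot> f' = h'"
    then show "u' = u"
      using u pushoutD[of n g p u'] by (auto intro: pushout_jointly_epic[OF L])
  qed
qed

lemma FPC_pullback: "is_FPC C f m n g \<Longrightarrow> is_pullback C m g f n"
  unfolding is_FPC_def by blast

lemma FPC_factor: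
  assumes "is_FPC C f m n g" "is_pullback C m w u v"
    "t \<in> ar C" "dm C t = dm C u" "cd C t = dm C f" "f \<cdot> t = u"
  obtains y where "y \<in> ar C" "dm C y = cd C v" "cd C y = dm C g" "g \<cdot> y = w" "y \<cdot> v = n \<cdot> t"
  using assms unfolding is_FPC_def by metis

lemma FPC_unique:
  assumes "is_FPC C f m n g" "is_pullback C m w u v"
    "t \<in> ar C" "dm C t = dm C u" "cd C t = dm C f" "f \<cdot> t = u"
    "y \<in> ar C" "dm C y = cd C v" "cd C y = dm C g" "g \<cdot> y = w" "y \<cdot> v = n \<cdot> t"
    "y' \<in> ar C" "dm C y' = cd C v" "cd C y' = dm C g" "g \<cdot> y' = w" "y' \<cdot> v = n \<cdot> t"
  shows "y = y'"
  using assms unfolding is_FPC_def by blast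

lemma is_FPCI:
  assumes "is_pullback C m g f n"
    and "\<And>u v w t. is_pullback C m w u v \<Longrightarrow>
      t \<in> ar C \<Longrightarrow> dm C t = dm C u \<Longrightarrow> cd C t = dm C f \<Longrightarrow> f \<cdot> t = u \<Longrightarrow>
      \<exists>!y. y \<in> ar C \<and> dm C y = cd C v \<and> cd C y = dm C g \<and> g \<cdot> y = w \<and> y \<cdot> v = n \<cdot> t"
  shows "is_FPC C f m n g"
  using assms unfolding is_FPC_def by blast

lemma FPC_idt:
  assumes m: "m \<in> ar C"
  shows "is_FPC C (idt C (dm C m)) m m (idt C (cd C m))"
proof (rule is_FPCI)
  show "is_pullback C m (idt C (cd C m)) (idt C (dm C m)) m"
    using m by (rule pullback_idt)
  fix u v w t
  assume "is_pullback C m w u v" "t \<in> ar C" "cd C t = dm C (idt C (dm C m))" "idt C (dm C m) \<cdot> t = u"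
  then show "\<exists>!y. y \<in> ar C \<and> dm C y = cd C v \<and> cd C y = dm C (idt C (cd C m)) \<and>
      idt C (cd C m) \<cdot> y = w \<and> y \<cdot> v = m \<cdot> t"
    using m pullbackD[of m w u v] by (intro ex1I[of _ w]) auto
qed

lemma FPC_paste:
  assumes F1: "is_FPC C f n m f'" and F2: "is_FPC C g p n g'"
  shows "is_FPC C (g \<cdot> f) p m (g' \<cdot> f')"
proof (rule is_FPCI)
  note P1 = FPC_pullback[OF F1] and P2 = FPC_pullback[OF F2]
  note T1 = pullbackD[OF P1] and T2 = pullbackD[OF P2]
  show "is_pullback C p (g' \<cdot> f') (g \<cdot> f) m"
    using P2 P1 by (rule pullback_paste)
  have F1_sq: "f' \<cdot> (m \<cdot> x) = n \<cdot> (f \<cdot> x)" if "x \<in> ar C" "cd C x = dm C f" for x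
    by (rule comp_square_right) (use that T1 in simp_all)
  fix u v w t
  assume P: "is_pullback C p w u v" and t: "t \<in> ar C" "dm C t = dm C u" "cd C t = dm C (g \<cdot> f)"
    and gft: "(g \<cdot> f) \<cdot> t = u"
  note PT = pullbackD[OF P]
  have ft: "f \<cdot> t \<in> ar C" "dm C (f \<cdot> t) = dm C u" "cd C (f \<cdot> t) = dm C g" "g \<cdot> (f \<cdot> t) = u"
    using t T1 T2 gft by (simp_all add: comp_assoc)
  obtain y1 where y1: "y1 \<in> ar C" "dm C y1 = cd C v" "cd C y1 = dm C g'" "g' \<cdot> y1 = w"
      "y1 \<cdot> v = n \<cdot> (f \<cdot> t)"
    using FPC_factor[OF F2 P ft] by blast
  have P': "is_pullback C n y1 (f \<cdot> t) v"
    by (rule pullback_cancel[OF P2]) (use P y1 ft T2 in simp_all)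
  obtain y where y: "y \<in> ar C" "dm C y = cd C v" "cd C y = dm C f'" "f' \<cdot> y = y1" "y \<cdot> v = m \<cdot> t"
    by (rule FPC_factor[OF F1 P' t(1)]) (use t T1 T2 in simp_all)
  show "\<exists>!y. y \<in> ar C \<and> dm C y = cd C v \<and> cd C y = dm C (g' \<cdot> f') \<and> (g' \<cdot> f') \<cdot> y = w \<and> y \<cdot> v = m \<cdot> t"
  proof (rule ex1I[of _ y])
    show "y \<in> ar C \<and> dm C y = cd C v \<and> cd C y = dm C (g' \<cdot> f') \<and> (g' \<cdot> f') \<cdot> y = w \<and> y \<cdot> v = m \<cdot> t"
      using y y1 T1 T2 by (simp add: comp_assoc[of y f' g', symmetric])
  next
    fix y'
    assume y': "y' \<in> ar C \<and> dm C y' = cd C v \<and> cd C y' = dm C (g' \<cdot> f') \<and> (g' \<cdot> f') \<cdot> y' = w \<and> y' \<cdot> v = m \<cdot> t"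
    then have "f' \<cdot> y' = y1"
      by - (rule FPC_unique[OF F2 P ft _ _ _ _ _ y1],
        use T1 T2 t F1_sq PT in \<open>simp_all add: comp_assoc[of y' f' g'] comp_assoc[of v y' f', symmetric]\<close>)
    then show "y' = y"
      using FPC_unique[OF F1 P' t(1) _ _ refl _ _ _ _ _ y] y' ft t T1 T2 by simp
  qed
qed

lemma FPC_cancel:
  assumes Fp: "is_FPC C f e n f'" and Fs: "is_FPC C (f \<cdot> g) e q (f' \<cdot> y)"
    and sq: "y \<cdot> q = n \<cdot> g"
    and g: "g \<in> ar C" "cd C g = dm C f" and y: "y \<in> ar C" "cd C y = dm C f'"
  shows "is_FPC C g n q y"
proof (rule is_FPCI)
  note Pp = FPC_pullback[OF Fp] and Ps = FPC_pullback[OF Fs]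
  note Tp = pullbackD[OF Pp] and Ts = pullbackD[OF Ps]
  have y_dm: "dm C y = cd C q" and g_dm: "dm C g = dm C q"
    using Ts Tp y g by simp_all
  show "is_pullback C n y g q"
    by (rule pullback_cancel[OF Pp Ps sq[symmetric]]) (use g y Tp in simp_all)
  fix u v w t
  assume P: "is_pullback C n w u v" and t: "t \<in> ar C" "dm C t = dm C u" "cd C t = dm C g"
    and gt: "g \<cdot> t = u"
  note PT = pullbackD[OF P]
  have Pc: "is_pullback C e (f' \<cdot> w) (f \<cdot> u) v"
    using Pp P by (rule pullback_paste)
  have fgt: "(f \<cdot> g) \<cdot> t = f \<cdot> u"
    using t g gt Tp by (simp add: comp_assoc[of t g f, symmetric])
  obtain z where z: "z \<in> ar C" "dm C z = cd C v" "cd C z = dm C (f' \<cdot> y)" "(f' \<cdot> y) \<cdot> z = f' \<cdot> w"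
      "z \<cdot> v = q \<cdot> t"
    by (rule FPC_factor[OF Fs Pc t(1) _ _ fgt]) (use t g y PT Tp in simp_all)
  have "y \<cdot> z = w"
  proof (rule FPC_unique[OF Fp Pc _ _ _ refl])
    show "(y \<cdot> z) \<cdot> v = n \<cdot> u"
      using comp_square_right[OF sq, of t] z t g g_dm y y_dm gt Tp PT pullbackD(4)[OF Ps]
      by (simp add: comp_assoc[of v z y, symmetric])
  qed (use z y y_dm PT Tp in \<open>simp_all add: comp_assoc[of z y f']\<close>)
  show "\<exists>!z. z \<in> ar C \<and> dm C z = cd C v \<and> cd C z = dm C y \<and> y \<cdot> z = w \<and> z \<cdot> v = q \<cdot> t"
  proof (rule ex1I[of _ z])
    show "z \<in> ar C \<and> dm C z = cd C v \<and> cd C z = dm C y \<and> y \<cdot> z = w \<and> z \<cdot> v = q \<cdot> t"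
      using z y \<open>y \<cdot> z = w\<close> Tp by simp
  next
    fix z'
    assume "z' \<in> ar C \<and> dm C z' = cd C v \<and> cd C z' = dm C y \<and> y \<cdot> z' = w \<and> z' \<cdot> v = q \<cdot> t"
    then show "z' = z"
      by - (rule FPC_unique[OF Fs Pc t(1) _ _ fgt _ _ _ _ _ z],
        use y Tp t g PT in \<open>simp_all add: comp_assoc[of z' y f', symmetric]\<close>)
  qed
qed

lemma FPC_cartesian_factor:
  assumes Fp: "is_FPC C f e n f'" and Fs: "is_FPC C h e q h'"
    and g: "g \<in> ar C" "cd C g = dm C f" and fg: "f \<cdot> g = h"
  shows "\<exists>!y. is_FPC C g n q y \<and> f' \<cdot> y = h'"
proof -
  note Ps = FPC_pullback[OF Fs] and Tp = pullbackD[OF FPC_pullback[OF Fp]]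
  have "dm C g = dm C h"
    using fg g Tp by auto
  then obtain y where y: "y \<in> ar C" "dm C y = cd C q" "cd C y = dm C f'" "f' \<cdot> y = h'" "y \<cdot> q = n \<cdot> g"
    using FPC_factor[OF Fp Ps g(1) _ g(2) fg] by blast
  show ?thesis
  proof (rule ex1I[of _ y])
    show "is_FPC C g n q y \<and> f' \<cdot> y = h'"
      using FPC_cancel[OF Fp _ y(5) g y(1) y(3)] Fs fg y(4) by simp
  next
    fix y'
    assume y': "is_FPC C g n q y' \<and> f' \<cdot> y' = h'"
    then show "y' = y"
      by - (rule FPC_unique[OF Fp Ps g(1) _ g(2) fg _ _ _ _ _ y],
        use pullbackD[OF FPC_pullback[of g n q y']] \<open>dm C g = dm C h\<close> g Tp in auto)
  qed
qed

end

definition squares_cat ::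
  "('o, 'a) category \<Rightarrow> 'a set \<Rightarrow> ('a \<Rightarrow> 'a \<Rightarrow> 'a \<Rightarrow> 'a \<Rightarrow> bool) \<Rightarrow> ('a, 'a \<times> 'a \<times> 'a \<times> 'a) category"
where
  "squares_cat C M Q = \<lparr> ob = M,
     ar = {(m, n, f, f'). m \<in> M \<and> n \<in> M \<and> Q m n f f'},
     dm = (\<lambda>(m, n, f, f'). m),
     cd = (\<lambda>(m, n, f, f'). n),
     idt = (\<lambda>m. (m, m, idt C (dm C m), idt C (cd C m))),
     cmp = (\<lambda>(n, p, g, g') (m, n', f, f'). (m, p, cmp C g f, cmp C g' f')) \<rparr>"

lemma PO_h_eq_squares_cat: "PO_h C M = squares_cat C M (\<lambda>m n f f'. is_pushout C m f n f')"
  unfolding PO_h_def squares_cat_def ..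

lemma FPC_h_eq_squares_cat: "FPC_h C M = squares_cat C M (\<lambda>m n f f'. is_FPC C f n m f')"
  unfolding FPC_h_def squares_cat_def ..

locale square_class = cat +
  fixes M and Q
  assumes M_ar: "M \<subseteq> ar C"
    and Q_arrows: "m \<in> M \<Longrightarrow> n \<in> M \<Longrightarrow> Q m n f f' \<Longrightarrow>
      f \<in> ar C \<and> f' \<in> ar C \<and> dm C f = dm C m \<and> cd C f = dm C n \<and> dm C f' = cd C m \<and> cd C f' = cd C n"
    and Q_idt: "m \<in> M \<Longrightarrow> Q m m (idt C (dm C m)) (idt C (cd C m))"
    and Q_comp: "m \<in> M \<Longrightarrow> n \<in> M \<Longrightarrow> p \<in> M \<Longrightarrow> Q m n f f' \<Longrightarrow> Q n p g g' \<Longrightarrow>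
      Q m p (g \<cdot> f) (g' \<cdot> f')"
begin

abbreviation (input) S where "S \<equiv> squares_cat C M Q"

lemma squares_cat_simps [simp]:
  "ob S = M"
  "(m, n, f, f') \<in> ar S \<longleftrightarrow> m \<in> M \<and> n \<in> M \<and> Q m n f f'"
  "dm S (m, n, f, f') = m" "cd S (m, n, f, f') = n"
  "idt S m = (m, m, idt C (dm C m), idt C (cd C m))"
  "cmp S (n, p, g, g') (m, n', f, f') = (m, p, g \<cdot> f, g' \<cdot> f')"
  unfolding squares_cat_def by simp_all

lemma ar_squares_catE:
  assumes "x \<in> ar S"
  obtains m n f f' where "x = (m, n, f, f')" "m \<in> M" "n \<in> M" "Q m n f f'"
  using assms unfolding squares_cat_def by auto

lemma is_category_squares_cat: "is_category S"
  unfolding is_category_def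
proof (intro conjI allI ballI impI)
  fix x
  assume "x \<in> ar S"
  then obtain m n f f' where x: "x = (m, n, f, f')" "m \<in> M" "n \<in> M" "Q m n f f'"
    by (rule ar_squares_catE)
  with Q_arrows[OF x(2-4)] show "dm S x \<in> ob S" "cd S x \<in> ob S"
    "cmp S (idt S (cd S x)) x = x" "cmp S x (idt S (dm S x)) = x"
    by simp_all
next
  fix a
  assume "a \<in> ob S"
  then show "idt S a \<in> ar S" "dm S (idt S a) = a" "cd S (idt S a) = a"
    using Q_idt by simp_all
next
  fix x y
  assume "x \<in> ar S \<and> y \<in> ar S \<and> cd S x = dm S y"
  then show "cmp S y x \<in> ar S" "dm S (cmp S y x) = dm S x" "cd S (cmp S y x) = cd S y"
    using Q_comp by (auto elim!: ar_squares_catE)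
next
  fix x y z
  assume "x \<in> ar S \<and> y \<in> ar S \<and> z \<in> ar S \<and> cd S x = dm S y \<and> cd S y = dm S z"
  then show "cmp S z (cmp S y x) = cmp S (cmp S z y) x"
    using Q_arrows by (auto elim!: ar_squares_catE simp: comp_assoc)
qed

lemma is_functor_dom: "is_functor S C (dm C) dom_ar"
  unfolding is_functor_def
proof (intro conjI allI ballI impI)
  fix x
  assume "x \<in> ar S"
  then show "dom_ar x \<in> ar C" "dm C (dom_ar x) = dm C (dm S x)" "cd C (dom_ar x) = dm C (cd S x)"
    using Q_arrows by (auto elim!: ar_squares_catE simp: dom_ar_def)
next
  fix x y
  assume "x \<in> ar S \<and> y \<in> ar S \<and> cd S x = dm S y"
  then show "dom_ar (cmp S y x) = dom_ar y \<cdot> dom_ar x"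
    by (auto elim!: ar_squares_catE simp: dom_ar_def)
qed (use M_ar in \<open>auto simp: dom_ar_def\<close>)

lemma opfibration_squares_cat:
  assumes ex: "\<And>e f. e \<in> M \<Longrightarrow> f \<in> ar C \<Longrightarrow> dm C f = dm C e \<Longrightarrow> \<exists>n f'. n \<in> M \<and> Q e n f f'"
    and factor: "\<And>e n f f' p h h' g. Q e n f f' \<Longrightarrow> Q e p h h' \<Longrightarrow>
      g \<in> ar C \<Longrightarrow> dm C g = cd C f \<Longrightarrow> g \<cdot> f = h \<Longrightarrow> \<exists>!u. Q n p g u \<and> u \<cdot> f' = h'"
  shows "opfibration S C (dm C) dom_ar"
  unfolding opfibration_def
proof (intro conjI ballI impI)
  fix f e
  assume f: "f \<in> ar C" and e: "e \<in> ob S" and fe: "dm C e = dm C f"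
  then obtain n f' where n: "n \<in> M" "Q e n f f'"
    using ex by force
  have "opcartesian S C dom_ar (e, n, f, f')"
    unfolding opcartesian_def
  proof (intro conjI allI impI)
    fix \<psi> g
    assume "\<psi> \<in> ar S \<and> dm S \<psi> = dm S (e, n, f, f') \<and> g \<in> ar C \<and>
      dm C g = cd C (dom_ar (e, n, f, f')) \<and> cd C g = cd C (dom_ar \<psi>) \<and> g \<cdot> dom_ar (e, n, f, f') = dom_ar \<psi>"
    then obtain p h h' where \<psi>: "\<psi> = (e, p, h, h')" "p \<in> M" "Q e p h h'"
      and g: "g \<in> ar C" "dm C g = cd C f" "g \<cdot> f = h"
      by (auto elim!: ar_squares_catE simp: dom_ar_def)
    then obtain u where u: "Q n p g u" "u \<cdot> f' = h'" and uniq: "\<And>u'. Q n p g u' \<Longrightarrow> u' \<cdot> f' = h' \<Longrightarrow> u' = u"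
      using factor[OF n(2)] by metis
    show "\<exists>!\<chi>. \<chi> \<in> ar S \<and> dm S \<chi> = cd S (e, n, f, f') \<and> cd S \<chi> = cd S \<psi> \<and>
      cmp S \<chi> (e, n, f, f') = \<psi> \<and> dom_ar \<chi> = g"
    proof (rule ex1I[of _ "(n, p, g, u)"])
      fix \<chi>
      assume "\<chi> \<in> ar S \<and> dm S \<chi> = cd S (e, n, f, f') \<and> cd S \<chi> = cd S \<psi> \<and>
        cmp S \<chi> (e, n, f, f') = \<psi> \<and> dom_ar \<chi> = g"
      then show "\<chi> = (n, p, g, u)"
        using \<psi> uniq by (auto elim!: ar_squares_catE simp: dom_ar_def)
    qed (use \<psi> g n u in \<open>simp add: dom_ar_def\<close>)
  qed (use n e in simp)
  then show "\<exists>\<phi>. \<phi> \<in> ar S \<and> dm S \<phi> = e \<and> dom_ar \<phi> = f \<and> opcartesian S C dom_ar \<phi>"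
    using n e by (intro exI[of _ "(e, n, f, f')"]) (simp add: dom_ar_def)
qed (use is_cat is_category_squares_cat is_functor_dom in auto)

lemma fibration_squares_cat:
  assumes ex: "\<And>e f. e \<in> M \<Longrightarrow> f \<in> ar C \<Longrightarrow> cd C f = dm C e \<Longrightarrow> \<exists>n f'. n \<in> M \<and> Q n e f f'"
    and factor: "\<And>e n f f' q h h' g. Q n e f f' \<Longrightarrow> Q q e h h' \<Longrightarrow>
      g \<in> ar C \<Longrightarrow> cd C g = dm C f \<Longrightarrow> f \<cdot> g = h \<Longrightarrow> \<exists>!y. Q q n g y \<and> f' \<cdot> y = h'"
  shows "fibration S C (dm C) dom_ar"
  unfolding fibration_def
proof (intro conjI ballI impI)
  fix f e
  assume f: "f \<in> ar C" and e: "e \<in> ob S" and fe: "dm C e = cd C f"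
  then obtain n f' where n: "n \<in> M" "Q n e f f'"
    using ex by force
  have "cartesian S C dom_ar (n, e, f, f')"
    unfolding cartesian_def
  proof (intro conjI allI impI)
    fix \<psi> g
    assume "\<psi> \<in> ar S \<and> cd S \<psi> = cd S (n, e, f, f') \<and> g \<in> ar C \<and>
      cd C g = dm C (dom_ar (n, e, f, f')) \<and> dm C g = dm C (dom_ar \<psi>) \<and> dom_ar (n, e, f, f') \<cdot> g = dom_ar \<psi>"
    then obtain q h h' where \<psi>: "\<psi> = (q, e, h, h')" "q \<in> M" "Q q e h h'"
      and g: "g \<in> ar C" "cd C g = dm C f" "f \<cdot> g = h"
      by (auto elim!: ar_squares_catE simp: dom_ar_def)
    then obtain y where y: "Q q n g y" "f' \<cdot> y = h'" and uniq: "\<And>y'. Q q n g y' \<Longrightarrow> f' \<cdot> y' = h' \<Longrightarrow> y' = y"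
      using factor[OF n(2)] by metis
    show "\<exists>!\<chi>. \<chi> \<in> ar S \<and> dm S \<chi> = dm S \<psi> \<and> cd S \<chi> = dm S (n, e, f, f') \<and>
      cmp S (n, e, f, f') \<chi> = \<psi> \<and> dom_ar \<chi> = g"
    proof (rule ex1I[of _ "(q, n, g, y)"])
      fix \<chi>
      assume "\<chi> \<in> ar S \<and> dm S \<chi> = dm S \<psi> \<and> cd S \<chi> = dm S (n, e, f, f') \<and>
        cmp S (n, e, f, f') \<chi> = \<psi> \<and> dom_ar \<chi> = g"
      then show "\<chi> = (q, n, g, y)"
        using \<psi> uniq by (auto elim!: ar_squares_catE simp: dom_ar_def)
    qed (use \<psi> g n y in \<open>simp add: dom_ar_def\<close>)
  qed (use n e in simp)
  then show "\<exists>\<phi>. \<phi> \<in> ar S \<and> cd S \<phi> = e \<and> dom_ar \<phi> = f \<and> cartesian S C dom_ar \<phi>"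
    using n e by (intro exI[of _ "(n, e, f, f')"]) (simp add: dom_ar_def)
qed (use is_cat is_category_squares_cat is_functor_dom in auto)

end

context cat
begin

lemma square_class_pushouts: "M \<subseteq> ar C \<Longrightarrow> square_class C M (\<lambda>m n f f'. is_pushout C m f n f')"
  by unfold_locales (auto dest: pushoutD intro: pushout_idt pushout_paste)

lemma square_class_FPCs: "M \<subseteq> ar C \<Longrightarrow> square_class C M (\<lambda>m n f f'. is_FPC C f n m f')"
  by unfold_locales (auto dest: pullbackD[OF FPC_pullback] intro: FPC_idt FPC_paste)

end

theorem mainTheorem8:
  fixes C :: "('o, 'a) category" and M :: "'a set"
  assumes "is_category C" and "stable_system C M"
  shows "(has_pushouts_along C M \<longrightarrow> opfibration (PO_h C M) C (dm C) dom_ar) \<and>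
         (has_FPCs_along C M \<longrightarrow> fibration (FPC_h C M) C (dm C) dom_ar)"
proof (intro conjI impI)
  interpret cat C
    using assms(1) by unfold_locales
  have M_ar: "M \<subseteq> ar C" and M_pullback: "\<And>m g p q. m \<in> M \<Longrightarrow> is_pullback C m g p q \<Longrightarrow> q \<in> M"
    using assms(2) unfolding stable_system_def by blast+
  show "opfibration (PO_h C M) C (dm C) dom_ar" if pushouts: "has_pushouts_along C M"
  proof -
    have lift: "\<exists>n f'. n \<in> M \<and> is_pushout C e f n f'" if "e \<in> M" "f \<in> ar C" "dm C f = dm C e" for e f
      using pushouts that unfolding has_pushouts_along_def by blast
    show ?thesis
      unfolding PO_h_eq_squares_cat
      by (rule square_class.opfibration_squares_cat[OF square_class_pushouts[OF M_ar] lift pushout_opcartesian_factor])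
  qed
  show "fibration (FPC_h C M) C (dm C) dom_ar" if FPCs: "has_FPCs_along C M"
  proof -
    have lift: "\<exists>n f'. n \<in> M \<and> is_FPC C f e n f'" if "e \<in> M" "f \<in> ar C" "cd C f = dm C e" for e f
      using FPCs that M_pullback[OF \<open>e \<in> M\<close> FPC_pullback] unfolding has_FPCs_along_def by blast
    show ?thesis
      unfolding FPC_h_eq_squares_cat
      by (rule square_class.fibration_squares_cat[OF square_class_FPCs[OF M_ar] lift FPC_cartesian_factor])
  qed
qed

end
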